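(* Let $p_1>p_2\ge2$ be relatively prime positive integers, and write $p_1=ap_2+b$ with integers $a\ge1$ and $0<b<p_2$. Then the first $p_1+p_2$ terms of the D'Hondt sequence $S_1(p_1,p_2)$ are $$1^{a},\,2,\,1^{k_2},\,2,\,1^{k_3},\,2,\,\dots,\,1^{k_{p_2}},\,2,$$ where for $i=2,\dots,p_2$, $k_i=a+1$ if $i\in S$ and $k_i=a$ otherwise, with $S=\{\lceil jp_2/b\rceil : j=1,\dots,b\}$.
   Context: Stationary divisor method with cut point $c$ for votes $(p_1,p_2)$: seats are allocated one at a time. Initially $a_1=a_2=0$; each next seat goes to a party $i$ maximizing $p_i/(a_i+c)$, whose $a_i$ then increases by $1$. Ties are broken in favor of party $1$. D'Hondt's method is $c=1$. $S_1(p_1,p_2)$ is the infinite sequence of party labels (in $\{1,2\}$) of successive seats. The notation $1^k$ denotes $k$ consecutive $1$'s. *)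

theory Defs
  imports Complex_Main
begin

text \<open>Stationary divisor method with cut point c for votes (p1,p2).
  seats p1 p2 c n = (a1,a2), the seat counts after n seats have been allocated.
  The next seat goes to party 1 iff p1/(a1+c) >= p2/(a2+c) (ties favour party 1).\<close>

definition next_party :: "real \<Rightarrow> real \<Rightarrow> real \<Rightarrow> nat \<times> nat \<Rightarrow> nat" where
  "next_party p1 p2 c s =
     (if p1 / (real (fst s) + c) \<ge> p2 / (real (snd s) + c) then 1 else 2)"

fun seats :: "real \<Rightarrow> real \<Rightarrow> real \<Rightarrow> nat \<Rightarrow> nat \<times> nat" where
  "seats p1 p2 c 0 = (0, 0)"
| "seats p1 p2 c (Suc n) =
     (let s = seats p1 p2 c n in
      if next_party p1 p2 c s = 1 then (Suc (fst s), snd s) else (fst s, Suc (snd s)))"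

text \<open>The sequence S_c(p1,p2) of party labels, 0-indexed: entry n is the label of the (n+1)-st seat.\<close>
definition stationary_seq :: "real \<Rightarrow> real \<Rightarrow> real \<Rightarrow> nat \<Rightarrow> nat" where
  "stationary_seq c p1 p2 n = next_party p1 p2 c (seats p1 p2 c n)"

definition dhondt_seq :: "real \<Rightarrow> real \<Rightarrow> nat \<Rightarrow> nat" where
  "dhondt_seq p1 p2 = stationary_seq 1 p1 p2"

end

theory Submission
  imports Defs
begin

text \<open>With cut point 1 and integer votes, party 1 wins the next seat in state (x, m) iff
  x < \<lfloor>p1 (m + 1) / p2\<rfloor>.  Hence the sequence splits into blocks: the i-th block is a run of
  \<lfloor>p1 i / p2\<rfloor> - \<lfloor>p1 (i - 1) / p2\<rfloor> ones closed by a 2, and p2 blocks fill p1 + p2 seats.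
  For p1 = a p2 + b this run length is a plus \<lfloor>b i / p2\<rfloor> - \<lfloor>b (i - 1) / p2\<rfloor> \<in> {0, 1}, and the
  increment is 1 exactly when a multiple j p2 lies in (b (i - 1), b i], i.e. when i = \<lceil>j p2 / b\<rceil>.\<close>

lemma dhondt_next_party_eq:
  fixes p1 p2 x m :: nat
  assumes "0 < p2"
  shows "next_party (real p1) (real p2) 1 (x, m) = (if x < p1 * (m + 1) div p2 then 1 else 2)"
proof -
  have "real p2 / (real m + 1) \<le> real p1 / (real x + 1)
        \<longleftrightarrow> real p2 * (real x + 1) \<le> real p1 * (real m + 1)"
    by (simp add: divide_simps mult.commute)
  also have "\<dots> \<longleftrightarrow> p2 * (x + 1) \<le> p1 * (m + 1)"
    unfolding of_nat_le_iff[where 'a = real, symmetric] by (simp add: algebra_simps)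
  also have "\<dots> \<longleftrightarrow> x < p1 * (m + 1) div p2"
    using div_less_iff_less_mult[OF assms, of "p1 * (m + 1)" "x + 1"] by (auto simp: mult.commute)
  finally show ?thesis
    unfolding next_party_def by simp
qed

lemma dhondt_seats_run:
  fixes p1 p2 :: nat
  assumes "0 < p2" and "seats (real p1) (real p2) 1 n = (x, m)"
    and "x + t \<le> p1 * (m + 1) div p2"
  shows "seats (real p1) (real p2) 1 (n + t) = (x + t, m)"
  using assms(3)
proof (induction t)
  case 0
  then show ?case using assms(2) by simp
next
  case (Suc t)
  then have "seats (real p1) (real p2) 1 (n + t) = (x + t, m)" and "x + t < p1 * (m + 1) div p2"
    by simp_all
  then show ?case
    using dhondt_next_party_eq[OF assms(1)] by simp
qed

lemma dhondt_seats_block: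
  fixes p1 p2 :: nat
  assumes p2: "0 < p2" and seats_n: "seats (real p1) (real p2) 1 n = (x, m)"
    and x_le: "x \<le> p1 * (m + 1) div p2"
  defines "d \<equiv> p1 * (m + 1) div p2 - x"
  shows "map (dhondt_seq (real p1) (real p2)) [n..<n + d + 1] = replicate d 1 @ [2]"
    and "seats (real p1) (real p2) 1 (n + d + 1) = (p1 * (m + 1) div p2, m + 1)"
proof -
  have run: "seats (real p1) (real p2) 1 (n + t) = (x + t, m)" if "t \<le> d" for t
    using dhondt_seats_run[OF p2 seats_n] that x_le unfolding d_def by simp
  have party1: "dhondt_seq (real p1) (real p2) (n + t) = 1" if "t < d" for t
    using run[of t] that dhondt_next_party_eq[OF p2] d_def
    unfolding dhondt_seq_def stationary_seq_def by simp
  have party2: "dhondt_seq (real p1) (real p2) (n + d) = 2"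
    using run[of d] dhondt_next_party_eq[OF p2] x_le d_def
    unfolding dhondt_seq_def stationary_seq_def by simp
  have "map (dhondt_seq (real p1) (real p2)) [n..<n + d] = replicate d 1"
    by (rule nth_equalityI) (simp_all add: party1)
  then show "map (dhondt_seq (real p1) (real p2)) [n..<n + d + 1] = replicate d 1 @ [2]"
    using party2 by simp
  show "seats (real p1) (real p2) 1 (n + d + 1) = (p1 * (m + 1) div p2, m + 1)"
    using run[of d] dhondt_next_party_eq[OF p2] x_le d_def by (simp add: Let_def)
qed

lemma dhondt_seats_at_quota:
  fixes p1 p2 m :: nat
  assumes "0 < p2"
  shows "seats (real p1) (real p2) 1 (p1 * m div p2 + m) = (p1 * m div p2, m)"
proof (induction m)
  case 0
  then show ?case by simp
next
  case (Suc m)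
  have "p1 * m div p2 \<le> p1 * (m + 1) div p2"
    by (simp add: div_le_mono)
  from dhondt_seats_block(2)[OF assms Suc this] this show ?case
    by (simp add: add.commute del: seats.simps)
qed

lemma dhondt_seq_prefix_blocks:
  fixes p1 p2 m :: nat
  assumes "0 < p2"
  shows "map (dhondt_seq (real p1) (real p2)) [0..<p1 * m div p2 + m] =
    concat (map (\<lambda>i. replicate (p1 * i div p2 - p1 * (i - 1) div p2) 1 @ [2]) [1..<m + 1])"
proof (induction m)
  case 0
  then show ?case by simp
next
  case (Suc m)
  let ?q = "p1 * (m + 1) div p2" and ?n = "p1 * m div p2 + m"
  have mono: "p1 * m div p2 \<le> ?q"
    by (simp add: div_le_mono)
  have block_end: "?n + (?q - p1 * m div p2) + 1 = ?q + Suc m"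
    using mono by simp
  have block: "map (dhondt_seq (real p1) (real p2)) [?n..<?q + Suc m] =
      replicate (?q - p1 * m div p2) 1 @ [2]"
    using dhondt_seats_block(1)[OF assms dhondt_seats_at_quota[OF assms] mono]
    unfolding block_end .
  have "[0..<?q + Suc m] = [0..<?n] @ [?n..<?q + Suc m]"
    using upt_add_eq_append[of 0 ?n "?q - p1 * m div p2 + 1"]
    unfolding add.assoc[symmetric] block_end by simp
  then show ?case
    using Suc block by simp
qed

lemma nat_ceiling_ratio_eq_iff:
  fixes b p i j :: nat
  assumes "0 < b" and "1 \<le> i"
  shows "nat \<lceil>real j * real p / real b\<rceil> = i \<longleftrightarrow> b * (i - 1) < j * p \<and> j * p \<le> b * i"
proof -
  have "nat \<lceil>real j * real p / real b\<rceil> = i \<longleftrightarrow> \<lceil>real j * real p / real b\<rceil> = int i"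
    using assms by auto
  also have "\<dots> \<longleftrightarrow> real i - 1 < real j * real p / real b \<and> real j * real p / real b \<le> real i"
    by (simp add: ceiling_eq_iff)
  also have "\<dots> \<longleftrightarrow> real b * (real i - 1) < real j * real p \<and> real j * real p \<le> real b * real i"
    using assms by (simp add: pos_less_divide_eq pos_divide_le_eq mult.commute)
  also have "\<dots> \<longleftrightarrow> real (b * (i - 1)) < real (j * p) \<and> real (j * p) \<le> real (b * i)"
    using assms by (simp add: of_nat_diff)
  also have "\<dots> \<longleftrightarrow> b * (i - 1) < j * p \<and> j * p \<le> b * i"
    by (simp only: of_nat_less_iff of_nat_le_iff)
  finally show ?thesis .
qed

lemma mem_ceiling_multiples_iff:
  fixes b p i :: nat
  assumes b: "0 < b" and p: "0 < p" and i: "1 \<le> i" "i \<le> p"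
  shows "i \<in> {nat \<lceil>real j * real p / real b\<rceil> | j. 1 \<le> j \<and> j \<le> b}
         \<longleftrightarrow> b * (i - 1) div p < b * i div p"
proof
  assume "i \<in> {nat \<lceil>real j * real p / real b\<rceil> | j. 1 \<le> j \<and> j \<le> b}"
  then obtain j where "nat \<lceil>real j * real p / real b\<rceil> = i"
    by auto
  then have "b * (i - 1) < j * p" and "j * p \<le> b * i"
    using nat_ceiling_ratio_eq_iff[OF b i(1)] by auto
  then have "b * (i - 1) div p < j" and "j \<le> b * i div p"
    using div_less_iff_less_mult[OF p, of _ j] div_less_iff_less_mult[OF p, of "b * i" j]
    by (blast, linarith)
  then show "b * (i - 1) div p < b * i div p"
    by linarith
next
  assume step: "b * (i - 1) div p < b * i div p"
  define j where "j = b * i div p"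
  have "j * p \<le> b * i"
    unfolding j_def by (simp add: times_div_less_eq_dividend)
  moreover have "b * (i - 1) < j * p"
    using step div_less_iff_less_mult[OF p, of "b * (i - 1)" j] unfolding j_def by linarith
  moreover have "j \<le> b"
  proof -
    have "b * i div p \<le> b * p div p"
      using i(2) by (intro div_le_mono) simp
    then show ?thesis
      unfolding j_def using p by simp
  qed
  moreover have "1 \<le> j"
    using step unfolding j_def by linarith
  ultimately show "i \<in> {nat \<lceil>real j * real p / real b\<rceil> | j. 1 \<le> j \<and> j \<le> b}"
    using nat_ceiling_ratio_eq_iff[OF b i(1), of j p] by (intro CollectI exI[of _ j]) simp
qed

lemma div_quota_increment:
  fixes a b p1 p2 i :: nat
  assumes p2: "0 < p2" and "b < p2" and p1: "p1 = a * p2 + b" and i: "1 \<le> i"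
  shows "p1 * i div p2 - p1 * (i - 1) div p2 = (if b * (i - 1) div p2 < b * i div p2 then a + 1 else a)"
proof -
  have quota: "p1 * n div p2 = a * n + b * n div p2" for n
  proof -
    have "p1 * n = b * n + (a * n) * p2"
      by (simp add: p1 algebra_simps)
    then show ?thesis
      using p2 by simp
  qed
  have "b * i div p2 \<le> (b * (i - 1) + 1 * p2) div p2"
    using assms by (intro div_le_mono) (cases i, auto)
  then have "b * i div p2 \<le> b * (i - 1) div p2 + 1"
    using p2 by simp
  moreover have "b * (i - 1) div p2 \<le> b * i div p2"
    by (simp add: div_le_mono)
  moreover have "a * i = a * (i - 1) + a"
    using i by (cases i) auto
  ultimately show ?thesis
    unfolding quota by auto
qed

theorem mainTheorem13:
  fixes p1 p2 a b :: nat
  assumes "p1 > p2" and "p2 \<ge> 2" and "coprime p1 p2"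
    and "p1 = a * p2 + b" and "a \<ge> 1" and "0 < b" and "b < p2"
  defines "S \<equiv> {nat \<lceil>real j * real p2 / real b\<rceil> | j. 1 \<le> j \<and> j \<le> b}"
  defines "k \<equiv> (\<lambda>i::nat. if i \<in> S then a + 1 else a)"
  shows "map (dhondt_seq (real p1) (real p2)) [0..<p1 + p2] =
           replicate a 1 @ [2] @ concat (map (\<lambda>i. replicate (k i) 1 @ [2]) [2..<p2 + 1])"
proof -
  have p2: "0 < p2"
    using assms(2) by simp
  have k_1: "k 1 = a"
    using mem_ceiling_multiples_iff[OF assms(6) p2, of 1] assms(7) p2 unfolding k_def S_def by simp
  have "map (dhondt_seq (real p1) (real p2)) [0..<p1 + p2] =
      concat (map (\<lambda>i. replicate (p1 * i div p2 - p1 * (i - 1) div p2) 1 @ [2]) [1..<p2 + 1])"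
    using dhondt_seq_prefix_blocks[OF p2, of p1 p2] p2 by simp
  also have "\<dots> = concat (map (\<lambda>i. replicate (k i) 1 @ [2]) [1..<p2 + 1])"
  proof (intro arg_cong[where f = concat] map_cong)
    fix i
    assume "i \<in> set [1..<p2 + 1]"
    then have "1 \<le> i" and "i \<le> p2"
      by auto
    then show "replicate (p1 * i div p2 - p1 * (i - 1) div p2) 1 @ [2] = replicate (k i) 1 @ [2]"
      using div_quota_increment[OF p2 assms(7,4)] mem_ceiling_multiples_iff[OF assms(6) p2]
      unfolding k_def S_def by simp
  qed simp
  also have "[1..<p2 + 1] = 1 # [2..<p2 + 1]"
    using p2 by (simp add: upt_conv_Cons numeral_2_eq_2)
  finally show ?thesis
    using k_1 by simp
qed

end
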